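(* Let $G$ be a Garside group with Garside element $\Delta$, let $m$ be the smallest positive integer such that $\Delta^m$ is central in $G$, and let $G_\Delta=G/\langle\Delta^m\rangle$. Then every finite subgroup of $G_\Delta$ is cyclic.
   Context: $G$ is a Garside group: the group of fractions of a Garside monoid $G^+$ (an atomic, left and right cancellative monoid that is a lattice under both the prefix order $\le_L$ and the suffix order $\le_R$, with a Garside element $\Delta$ whose left and right divisors coincide, form a finite set, and generate $G^+$). Some positive power of $\Delta$ is always central in $G$, so $m$ is well defined; $\langle\Delta^m\rangle$ denotes the (normal) cyclic subgroup generated by $\Delta^m$. *)

theory Defs
  imports "HOL-Algebra.Coset" "HOL-Algebra.Generated_Groups"
begin

definition list_prod :: "('a, 'c) monoid_scheme \<Rightarrow> 'a list \<Rightarrow> 'a" where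
  "list_prod M xs = foldr (\<lambda>x y. x \<otimes>\<^bsub>M\<^esub> y) xs \<one>\<^bsub>M\<^esub>"

definition left_div :: "('a, 'c) monoid_scheme \<Rightarrow> 'a \<Rightarrow> 'a \<Rightarrow> bool" where
  "left_div M a b \<longleftrightarrow> (\<exists>c\<in>carrier M. b = a \<otimes>\<^bsub>M\<^esub> c)"

definition right_div :: "('a, 'c) monoid_scheme \<Rightarrow> 'a \<Rightarrow> 'a \<Rightarrow> bool" where
  "right_div M a b \<longleftrightarrow> (\<exists>c\<in>carrier M. b = c \<otimes>\<^bsub>M\<^esub> a)"

definition cancellative :: "('a, 'c) monoid_scheme \<Rightarrow> bool" where
  "cancellative M \<longleftrightarrow>
     (\<forall>a\<in>carrier M. \<forall>b\<in>carrier M. \<forall>c\<in>carrier M.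
        (a \<otimes>\<^bsub>M\<^esub> b = a \<otimes>\<^bsub>M\<^esub> c \<longrightarrow> b = c) \<and>
        (b \<otimes>\<^bsub>M\<^esub> a = c \<otimes>\<^bsub>M\<^esub> a \<longrightarrow> b = c))"

definition atomic_monoid :: "('a, 'c) monoid_scheme \<Rightarrow> bool" where
  "atomic_monoid M \<longleftrightarrow>
     (\<forall>a\<in>carrier M. \<exists>N::nat. \<forall>xs. set xs \<subseteq> carrier M - {\<one>\<^bsub>M\<^esub>} \<and> list_prod M xs = a
        \<longrightarrow> length xs \<le> N)"

definition is_lattice_order :: "'a set \<Rightarrow> ('a \<Rightarrow> 'a \<Rightarrow> bool) \<Rightarrow> bool" where
  "is_lattice_order A R \<longleftrightarrow>
     (\<forall>a\<in>A. \<forall>b\<in>A.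
        (\<exists>j\<in>A. R a j \<and> R b j \<and> (\<forall>z\<in>A. R a z \<and> R b z \<longrightarrow> R j z)) \<and>
        (\<exists>g\<in>A. R g a \<and> R g b \<and> (\<forall>z\<in>A. R z a \<and> R z b \<longrightarrow> R z g)))"

definition garside_element :: "('a, 'c) monoid_scheme \<Rightarrow> 'a \<Rightarrow> bool" where
  "garside_element M \<Delta> \<longleftrightarrow> \<Delta> \<in> carrier M \<and>
     {a\<in>carrier M. left_div M a \<Delta>} = {a\<in>carrier M. right_div M a \<Delta>} \<and>
     finite {a\<in>carrier M. left_div M a \<Delta>} \<and>
     (\<forall>a\<in>carrier M. \<exists>xs. set xs \<subseteq> {d\<in>carrier M. left_div M d \<Delta>} \<and> list_prod M xs = a)"

definition garside_monoid :: "('a, 'c) monoid_scheme \<Rightarrow> 'a \<Rightarrow> bool" where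
  "garside_monoid M \<Delta> \<longleftrightarrow> monoid M \<and> atomic_monoid M \<and> cancellative M \<and>
     is_lattice_order (carrier M) (left_div M) \<and>
     is_lattice_order (carrier M) (right_div M) \<and>
     garside_element M \<Delta>"

definition group_of_fractions ::
  "('a, 'c) monoid_scheme \<Rightarrow> ('b, 'd) monoid_scheme \<Rightarrow> ('a \<Rightarrow> 'b) \<Rightarrow> bool" where
  "group_of_fractions M G \<phi> \<longleftrightarrow> group G \<and> \<phi> \<in> hom M G \<and> inj_on \<phi> (carrier M) \<and>
     (\<forall>g\<in>carrier G. \<exists>a\<in>carrier M. \<exists>b\<in>carrier M. g = inv\<^bsub>G\<^esub> (\<phi> a) \<otimes>\<^bsub>G\<^esub> \<phi> b)"

definition central_elem :: "('b, 'd) monoid_scheme \<Rightarrow> 'b \<Rightarrow> bool" where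
  "central_elem G z \<longleftrightarrow> z \<in> carrier G \<and> (\<forall>g\<in>carrier G. g \<otimes>\<^bsub>G\<^esub> z = z \<otimes>\<^bsub>G\<^esub> g)"

definition cyclic_subgroup :: "('b, 'd) monoid_scheme \<Rightarrow> 'b set \<Rightarrow> bool" where
  "cyclic_subgroup G K \<longleftrightarrow> (\<exists>x\<in>K. K = generate G {x})"

end

theory Submission
  imports Defs "HOL-Algebra.Multiplicative_Group"
begin

(* (1) Group theory.  Let G be torsion-free and z central in G.  If z = 1 every finite
   subgroup of G / <z> is trivial.  Otherwise z has infinite order, every element of G is
   uniquely z^k r with r a fixed coset representative, and for a finite subgroup K of the
   quotient the transfer  transfer g = sum over C in K of the z-exponent of rep(C) g  is a
   homomorphism from the preimage L of K to the integers with g^|K| = z^(transfer g).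
   Torsion-freeness makes it injective, so L embeds in the integers, hence is cyclic, and
   so is its image K.

   (2) Garside theory.  Conjugation by Delta permutes the finite set of simple elements,
   so some power Delta^k is central (making m well defined).  The prefix order of the
   monoid extends to a lattice order on G, invariant under left multiplication; if x^n = 1
   then left multiplication by x permutes the powers of x and fixes their least upper
   bound, forcing x = 1.  So G is torsion-free and (1) applies to z = Delta^m. *)

definition torsion_free :: "('a, 'b) monoid_scheme \<Rightarrow> bool" where
  "torsion_free G \<longleftrightarrow>
     (\<forall>x\<in>carrier G. \<forall>n::nat. 0 < n \<and> x [^]\<^bsub>G\<^esub> n = \<one>\<^bsub>G\<^esub> \<longrightarrow> x = \<one>\<^bsub>G\<^esub>)"

lemma torsion_freeD:
  "torsion_free G \<Longrightarrow> x \<in> carrier G \<Longrightarrow> 0 < n \<Longrightarrow> x [^]\<^bsub>G\<^esub> (n::nat) = \<one>\<^bsub>G\<^esub> \<Longrightarrow> x = \<one>\<^bsub>G\<^esub>"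
  unfolding torsion_free_def by blast

lemma int_subgroup_principal:
  fixes S :: "int set"
  assumes nonempty: "S \<noteq> {}"
    and closed: "\<And>x y q. x \<in> S \<Longrightarrow> y \<in> S \<Longrightarrow> x - q * y \<in> S"
  shows "\<exists>d\<in>S. \<forall>x\<in>S. d dvd x"
proof (cases "S \<subseteq> {0}")
  case True
  then show ?thesis using nonempty by auto
next
  case False
  then obtain x where x: "x \<in> S" "x \<noteq> 0" by blast
  have minus_x: "- x \<in> S" using closed[OF x(1) x(1), of 2] by simp
  have "\<exists>n::nat. 0 < n \<and> int n \<in> S"
  proof (cases "x > 0")
    case True
    then show ?thesis using x(1) by (intro exI[of _ "nat x"]) simp
  next
    case False
    then show ?thesis using minus_x x(2) by (intro exI[of _ "nat (- x)"]) simp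
  qed
  define d where "d = (LEAST n. 0 < n \<and> int n \<in> S)"
  have d: "0 < d" "int d \<in> S" using LeastI_ex[OF \<open>\<exists>n. _\<close>] unfolding d_def by auto
  have least: "d \<le> n" if "0 < n" "int n \<in> S" for n
    unfolding d_def using that by (intro Least_le) simp
  have "int d dvd y" if y: "y \<in> S" for y
  proof (rule ccontr)
    assume "\<not> int d dvd y"
    then have r: "0 < y mod int d" using d(1) by (simp add: dvd_eq_mod_eq_0 order_le_neq_trans)
    have "y mod int d = y - (y div int d) * int d" by (simp add: minus_div_mult_eq_mod)
    then have "int (nat (y mod int d)) \<in> S" using closed[OF y d(2)] r by simp
    then have "d \<le> nat (y mod int d)" using least r by simp
    then have "int d \<le> y mod int d" using r by (simp add: le_nat_iff)
    moreover have "y mod int d < int d" using d(1) by simp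
    ultimately show False by linarith
  qed
  then show ?thesis using d(2) by blast
qed

lemma (in group) commutes_inv:
  assumes y: "y \<in> carrier G" and g: "g \<in> carrier G" and commute: "g \<otimes> y = y \<otimes> g"
  shows "g \<otimes> inv y = inv y \<otimes> g"
proof -
  have "g \<otimes> inv y = inv y \<otimes> (y \<otimes> g) \<otimes> inv y" using y g by (simp add: m_assoc[symmetric])
  also have "\<dots> = inv y \<otimes> (g \<otimes> y) \<otimes> inv y" by (simp only: commute)
  also have "\<dots> = inv y \<otimes> g" using y g by (simp add: m_assoc)
  finally show ?thesis .
qed

lemma (in group) commutes_int_pow:
  assumes z: "z \<in> carrier G" and g: "g \<in> carrier G" and commute: "g \<otimes> z = z \<otimes> g"
  shows "g \<otimes> z [^] (i::int) = z [^] i \<otimes> g"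
proof -
  have nat_case: "g \<otimes> z [^] (n::nat) = z [^] n \<otimes> g" for n
    using group_commutes_pow[OF commute[symmetric] z g] by simp
  show ?thesis
  proof (cases i rule: int_cases)
    case (nonneg n)
    then show ?thesis using nat_case by (simp add: int_pow_int)
  next
    case (neg n)
    show ?thesis
      unfolding neg int_pow_neg_int[OF z] by (rule commutes_inv[OF nat_pow_closed[OF z] g nat_case])
  qed
qed

lemma (in group) central_generate_normal:
  assumes z: "z \<in> carrier G" and central: "\<And>g. g \<in> carrier G \<Longrightarrow> g \<otimes> z = z \<otimes> g"
  shows "generate G {z} \<lhd> G"
proof (rule normal_generateI)
  fix h g assume "h \<in> {z}" and g: "g \<in> carrier G"
  then show "g \<otimes> h \<otimes> inv g \<in> {z}" using z central[OF g] by (simp add: m_assoc)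
qed (use z in auto)

text \<open>By Lagrange in K, the |K|-th power of any element lying over K falls into N.\<close>

lemma (in group) finite_subgroup_of_quotient_pow_card:
  assumes N: "N \<lhd> G" and K: "subgroup K (G Mod N)" "finite K"
    and g: "g \<in> carrier G" "N #> g \<in> K"
  shows "g [^] card K \<in> N"
proof -
  interpret N: normal N G by fact
  interpret Q: group "G Mod N" by (rule N.factorgroup_is_group)
  interpret KQ: group "(G Mod N)\<lparr>carrier := K\<rparr>" by (rule Q.subgroup_imp_group[OF K(1)])
  have "(N #> g) [^]\<^bsub>(G Mod N)\<lparr>carrier := K\<rparr>\<^esub> card K = N"
    using KQ.pow_order_eq_1[of "N #> g"] g K by (simp add: order_def)
  then have "N #> (g [^] card K) = N"
    using N.FactGroup_pow[OF g(1), of "card K"] Q.nat_pow_consistent g(2) by simp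
  then show ?thesis using rcos_self[of "g [^] card K" N] g N.subgroup_axioms by auto
qed

lemma (in group) subgroup_right_mult_bij:
  assumes K: "subgroup K G" and a: "a \<in> K"
  shows "bij_betw (\<lambda>x. x \<otimes> a) K K"
proof (rule bij_betw_byWitness[where f' = "\<lambda>x. x \<otimes> inv a"])
  have a_carrier: "a \<in> carrier G" using K a by (rule subgroup.mem_carrier)
  have K_carrier: "x \<in> carrier G" if "x \<in> K" for x using K that by (rule subgroup.mem_carrier)
  show "\<forall>x\<in>K. x \<otimes> a \<otimes> inv a = x" using a_carrier K_carrier by (simp add: m_assoc)
  show "\<forall>x\<in>K. x \<otimes> inv a \<otimes> a = x" using a_carrier K_carrier by (simp add: m_assoc)
  show "(\<lambda>x. x \<otimes> a) ` K \<subseteq> K" using subgroup.m_closed[OF K _ a] by blast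
  show "(\<lambda>x. x \<otimes> inv a) ` K \<subseteq> K"
    using subgroup.m_closed[OF K _ subgroup.m_inv_closed[OF K a]] by blast
qed

locale central_quotient = group G for G (structure) +
  fixes z :: 'a
  assumes z_closed: "z \<in> carrier G"
    and z_central: "\<And>g. g \<in> carrier G \<Longrightarrow> g \<otimes> z = z \<otimes> g"
    and z_infinite_order: "\<And>n::nat. 0 < n \<Longrightarrow> z [^] n \<noteq> \<one>"
begin

abbreviation Z :: "'a set" where "Z \<equiv> generate G {z}"

sublocale Z: normal Z G by (rule central_generate_normal[OF z_closed z_central])
sublocale Q: group "G Mod Z" by (rule Z.factorgroup_is_group)

lemma Z_eq: "Z = range (\<lambda>k::int. z [^] k)"
  using generate_pow[OF z_closed] by auto

lemma zpow_inj:
  assumes eq: "z [^] (i::int) = z [^] j" shows "i = j"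
proof -
  have zpow_ne_one: "z [^] k \<noteq> \<one>" if "0 < k" for k :: int
    using z_infinite_order[of "nat k"] that by (simp add: pow_nat)
  have "z [^] (i - j) = \<one>" "z [^] (j - i) = \<one>" using eq z_closed by (simp_all add: int_pow_diff)
  then show ?thesis using zpow_ne_one[of "i - j"] zpow_ne_one[of "j - i"] by linarith
qed

lemma coset_hom: "(\<lambda>x. Z #> x) \<in> hom G (G Mod Z)" by (rule Z.r_coset_hom_Mod)

lemma coset_mult: "x \<in> carrier G \<Longrightarrow> y \<in> carrier G \<Longrightarrow> Z #> (x \<otimes> y) = (Z #> x) \<otimes>\<^bsub>G Mod Z\<^esub> (Z #> y)"
  using coset_hom by (simp add: hom_mult)

lemma coset_zpow:
  assumes y: "y \<in> carrier G" shows "Z #> (z [^] (k::int) \<otimes> y) = Z #> y"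
proof -
  have "z [^] k \<in> Z" using Z_eq by blast
  then have "Z #> z [^] k = Z" using z_closed by (intro coset_join2[OF _ Z.subgroup_axioms]) auto
  then show ?thesis using coset_mult_assoc[OF Z.subset _ y, of "z [^] k"] z_closed by simp
qed

definition rep :: "'a set \<Rightarrow> 'a" where "rep C = (SOME g. g \<in> carrier G \<and> Z #> g = C)"

lemma rep_spec:
  assumes "C \<in> carrier (G Mod Z)" shows "rep C \<in> carrier G" "Z #> rep C = C"
proof -
  have "\<exists>g. g \<in> carrier G \<and> Z #> g = C" using assms by (auto simp: FactGroup_def RCOSETS_def)
  then have "rep C \<in> carrier G \<and> Z #> rep C = C" unfolding rep_def by (rule someI_ex)
  then show "rep C \<in> carrier G" "Z #> rep C = C" by auto
qed

lemma rep_closed: "x \<in> carrier G \<Longrightarrow> rep (Z #> x) \<in> carrier G"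
  using rep_spec coset_hom[THEN hom_in_carrier] by blast

lemma decompose: assumes x: "x \<in> carrier G" shows "\<exists>k::int. x = z [^] k \<otimes> rep (Z #> x)"
proof -
  let ?r = "rep (Z #> x)"
  have r: "?r \<in> carrier G" "Z #> ?r = Z #> x" using rep_spec coset_hom[THEN hom_in_carrier] x by auto
  have "x \<in> Z #> ?r" using repr_independenceD[OF Z.subgroup_axioms x] r by simp
  then have "x \<otimes> inv ?r \<in> Z" using Z.rcos_module_imp[OF is_group r(1)] by simp
  then obtain k where k: "x \<otimes> inv ?r = z [^] (k::int)" using Z_eq by blast
  have "x = x \<otimes> inv ?r \<otimes> ?r" using x r(1) by (simp add: m_assoc)
  then have "x = z [^] k \<otimes> ?r" by (simp only: k)
  then show ?thesis by blast
qed

definition coord :: "'a \<Rightarrow> int" where "coord x = (THE k. x = z [^] k \<otimes> rep (Z #> x))"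

lemma coord_eq:
  assumes x: "x \<in> carrier G" and eq: "x = z [^] k \<otimes> rep (Z #> x)" shows "coord x = k"
  unfolding coord_def
proof (rule the_equality)
  fix k' :: int assume eq': "x = z [^] k' \<otimes> rep (Z #> x)"
  have "z [^] k' \<otimes> rep (Z #> x) = z [^] k \<otimes> rep (Z #> x)" using trans[OF sym[OF eq'] eq] .
  then have "z [^] k' = z [^] k"
    by (rule iffD1[OF right_cancel[OF rep_closed[OF x] int_pow_closed[OF z_closed] int_pow_closed[OF z_closed]]])
  then show "k' = k" by (rule zpow_inj)
qed (rule eq)

lemma coord_spec: assumes x: "x \<in> carrier G" shows "z [^] coord x \<otimes> rep (Z #> x) = x"
proof -
  obtain k :: int where k: "x = z [^] k \<otimes> rep (Z #> x)" using decompose[OF x] by blast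
  show ?thesis unfolding coord_eq[OF x k] by (rule sym[OF k])
qed

lemma coord_zpow_mult: assumes y: "y \<in> carrier G" shows "coord (z [^] (a::int) \<otimes> y) = a + coord y"
proof (rule coord_eq)
  show "z [^] a \<otimes> y \<in> carrier G" using y z_closed by simp
  have "z [^] (a + coord y) \<otimes> rep (Z #> y) = z [^] a \<otimes> y"
    using z_closed rep_closed[OF y] by (simp add: int_pow_mult m_assoc coord_spec[OF y])
  then show "z [^] a \<otimes> y = z [^] (a + coord y) \<otimes> rep (Z #> (z [^] a \<otimes> y))"
    unfolding coset_zpow[OF y] by (rule sym)
qed

lemma coord_mult: assumes x: "x \<in> carrier G" and y: "y \<in> carrier G"
  shows "coord (x \<otimes> y) = coord x + coord (rep (Z #> x) \<otimes> y)"
proof -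
  have "z [^] coord x \<otimes> (rep (Z #> x) \<otimes> y) = x \<otimes> y"
    using z_closed rep_closed[OF x] y by (simp add: m_assoc[symmetric] coord_spec[OF x])
  then show ?thesis using coord_zpow_mult[OF m_closed[OF rep_closed[OF x] y], of "coord x"] by simp
qed

lemma coord_rep: "C \<in> carrier (G Mod Z) \<Longrightarrow> coord (rep C) = 0"
  using rep_spec by (intro coord_eq) auto

context
  fixes K :: "'a set set"
  assumes K_subgroup: "subgroup K (G Mod Z)" and K_finite: "finite K"
begin

lemma K_carrier: "C \<in> K \<Longrightarrow> C \<in> carrier (G Mod Z)"
  by (rule subgroup.mem_carrier[OF K_subgroup])

lemma card_K_pos: "0 < card K"
  using K_finite subgroup.one_closed[OF K_subgroup] by (auto simp: card_gt_0_iff)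

definition lift :: "'a set" where "lift = {g \<in> carrier G. Z #> g \<in> K}"

lemma lift_carrier: "g \<in> lift \<Longrightarrow> g \<in> carrier G"
  by (simp add: lift_def)

lemma rep_in_lift: "C \<in> K \<Longrightarrow> rep C \<in> lift"
  using rep_spec[OF K_carrier] by (simp add: lift_def)

lemma lift_subgroup: "subgroup lift G"
proof (rule subgroupI)
  show "lift \<subseteq> carrier G" by (auto simp: lift_def)
  have "Z #> \<one> = Z" by (rule Z.rcos_const[OF is_group Z.one_closed])
  then have "\<one> \<in> lift" using subgroup.one_closed[OF K_subgroup] by (simp add: lift_def)
  then show "lift \<noteq> {}" by blast
next
  fix g assume g: "g \<in> lift"
  then have gc: "g \<in> carrier G" by (simp add: lift_def)
  have "Z #> inv g = inv\<^bsub>G Mod Z\<^esub> (Z #> g)"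
    using Z.inv_FactGroup[OF coset_hom[THEN hom_in_carrier, OF gc]] Z.rcos_inv[OF gc] by simp
  then show "inv g \<in> lift" using g K_subgroup by (simp add: lift_def subgroup.m_inv_closed)
next
  fix g h assume g: "g \<in> lift" and h: "h \<in> lift"
  then have "(Z #> g) \<otimes>\<^bsub>G Mod Z\<^esub> (Z #> h) \<in> K"
    by (intro subgroup.m_closed[OF K_subgroup]) (simp_all add: lift_def)
  then show "g \<otimes> h \<in> lift" using g h by (simp add: lift_def coset_mult)
qed

lemma z_in_lift: "z \<in> lift"
proof -
  have "Z #> z = Z" by (rule Z.rcos_const[OF is_group generate.incl]) simp
  then show ?thesis using subgroup.one_closed[OF K_subgroup] z_closed by (simp add: lift_def)
qed

definition transfer :: "'a \<Rightarrow> int" where "transfer g = (\<Sum>C\<in>K. coord (rep C \<otimes> g))"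

text \<open>The transfer is additive on the preimage: right multiplication by g permutes K.\<close>

lemma transfer_mult:
  assumes g: "g \<in> lift" and h: "h \<in> carrier G"
  shows "transfer (g \<otimes> h) = transfer g + transfer h"
proof -
  have gc: "g \<in> carrier G" using g by (rule lift_carrier)
  have step: "coord (rep C \<otimes> (g \<otimes> h))
      = coord (rep C \<otimes> g) + coord (rep (C \<otimes>\<^bsub>G Mod Z\<^esub> (Z #> g)) \<otimes> h)" if C: "C \<in> K" for C
  proof -
    have r: "rep C \<in> carrier G" "Z #> rep C = C" using rep_spec K_carrier C by auto
    have "coord (rep C \<otimes> (g \<otimes> h)) = coord (rep C \<otimes> g \<otimes> h)" using r gc h by (simp add: m_assoc)
    also have "\<dots> = coord (rep C \<otimes> g) + coord (rep (Z #> (rep C \<otimes> g)) \<otimes> h)"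
      by (rule coord_mult[OF m_closed[OF r(1) gc] h])
    finally show ?thesis using r gc by (simp add: coset_mult)
  qed
  have "(\<Sum>C\<in>K. coord (rep (C \<otimes>\<^bsub>G Mod Z\<^esub> (Z #> g)) \<otimes> h)) = transfer h"
    unfolding transfer_def
    using sum.reindex_bij_betw[OF Q.subgroup_right_mult_bij[OF K_subgroup],
        of "Z #> g" "\<lambda>C. coord (rep C \<otimes> h)"] g
    by (simp add: lift_def)
  then show ?thesis using step by (simp add: transfer_def sum.distrib)
qed

lemma transfer_zpow: "transfer (z [^] (a::int)) = int (card K) * a"
proof -
  have "coord (rep C \<otimes> z [^] a) = a" if C: "C \<in> K" for C
  proof -
    have r: "rep C \<in> carrier G" using rep_spec K_carrier C by auto
    have "rep C \<otimes> z [^] a = z [^] a \<otimes> rep C" using commutes_int_pow[OF z_closed r z_central[OF r]] .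
    then show ?thesis using coord_zpow_mult[OF r] coord_rep[OF K_carrier[OF C]] by simp
  qed
  then show ?thesis unfolding transfer_def by simp
qed

lemma transfer_hom: "transfer \<in> hom (G\<lparr>carrier := lift\<rparr>) integer_group"
  by (rule homI) (auto simp: transfer_mult lift_carrier)

lemma transfer_int_pow: "g \<in> lift \<Longrightarrow> transfer (g [^] (i::int)) = i * transfer g"
  using hom_int_pow[OF transfer_hom, of g i] subgroup_imp_group[OF lift_subgroup] is_group
    int_pow_consistent[OF lift_subgroup] by simp

lemma pow_card_eq_transfer: assumes g: "g \<in> lift" shows "g [^] card K = z [^] transfer g"
proof -
  have "g [^] card K \<in> Z"
    using finite_subgroup_of_quotient_pow_card[OF Z.normal_axioms K_subgroup K_finite] g
    by (simp add: lift_def)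
  then obtain a where a: "g [^] card K = z [^] (a::int)" using Z_eq by blast
  have "int (card K) * transfer g = transfer (g [^] card K)"
    using transfer_int_pow[OF g, of "int (card K)"] by (simp add: int_pow_int)
  also have "\<dots> = int (card K) * a" by (simp add: a transfer_zpow)
  finally have "transfer g = a" using card_K_pos by simp
  then show ?thesis using a by simp
qed

lemma transfer_inv: "g \<in> lift \<Longrightarrow> transfer (inv g) = - transfer g"
  using transfer_int_pow[of g "- 1"] lift_carrier[of g] by (simp add: int_pow_neg)

lemma transfer_inj_on: assumes tf: "torsion_free G" shows "inj_on transfer lift"
proof (rule inj_onI)
  fix g h assume g: "g \<in> lift" and h: "h \<in> lift" and eq: "transfer g = transfer h"
  have gc: "g \<in> carrier G" and hc: "h \<in> carrier G" using g h lift_carrier by auto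
  have x: "g \<otimes> inv h \<in> lift" using g h lift_subgroup by (simp add: subgroup.m_closed subgroup.m_inv_closed)
  have "transfer (g \<otimes> inv h) = 0"
    using transfer_mult[OF g inv_closed[OF hc]] transfer_inv[OF h] eq by simp
  then have "(g \<otimes> inv h) [^] card K = \<one>" using pow_card_eq_transfer[OF x] by simp
  then have "g \<otimes> inv h = \<one>" using torsion_freeD[OF tf _ card_K_pos] gc hc by simp
  then show "g = h" using gc hc by (simp add: inv_solve_right')
qed

lemma lift_cyclic:
  assumes tf: "torsion_free G" shows "\<exists>g0\<in>lift. \<forall>x\<in>lift. \<exists>q::int. x = g0 [^] q"
proof -
  have closed: "transfer x - q * transfer y \<in> transfer ` lift" if "x \<in> lift" "y \<in> lift" for x y q
  proof -
    have "x \<otimes> y [^] (- q) \<in> lift"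
      using that lift_subgroup by (simp add: subgroup.m_closed subgroup_int_pow_closed)
    moreover have "transfer (x \<otimes> y [^] (- q)) = transfer x - q * transfer y"
      using that transfer_mult transfer_int_pow lift_carrier by simp
    ultimately show ?thesis by (metis image_eqI)
  qed
  obtain g0 where g0: "g0 \<in> lift" and dvd: "\<And>x. x \<in> lift \<Longrightarrow> transfer g0 dvd transfer x"
    using int_subgroup_principal[of "transfer ` lift"] closed z_in_lift
    by blast
  have "\<exists>q::int. x = g0 [^] q" if x: "x \<in> lift" for x
  proof -
    obtain q where "transfer x = q * transfer g0" using dvd[OF x] by (auto simp: dvd_def mult.commute)
    then have "transfer x = transfer (g0 [^] q)" using transfer_int_pow[OF g0] by simp
    then show ?thesis
      using inj_onD[OF transfer_inj_on[OF tf]] x subgroup_int_pow_closed[OF lift_subgroup g0] by blast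
  qed
  then show ?thesis using g0 by blast
qed

lemma K_cyclic: assumes tf: "torsion_free G" shows "cyclic_subgroup (G Mod Z) K"
proof -
  obtain g0 where g0: "g0 \<in> lift" and gen: "\<And>x. x \<in> lift \<Longrightarrow> \<exists>q::int. x = g0 [^] q"
    using lift_cyclic[OF tf] by blast
  have g0c: "g0 \<in> carrier G" and g0K: "Z #> g0 \<in> K" using g0 by (auto simp: lift_def)
  have "K \<subseteq> generate (G Mod Z) {Z #> g0}"
  proof
    fix C assume C: "C \<in> K"
    obtain q where q: "rep C = g0 [^] (q::int)" using gen[OF rep_in_lift[OF C]] by blast
    have "C = (Z #> g0) [^]\<^bsub>G Mod Z\<^esub> q"
      using rep_spec[OF K_carrier[OF C]] q Z.FactGroup_int_pow[OF g0c] by simp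
    then show "C \<in> generate (G Mod Z) {Z #> g0}"
      using Q.generate_pow[OF K_carrier[OF g0K]] by blast
  qed
  moreover have "generate (G Mod Z) {Z #> g0} \<subseteq> K"
    by (rule Q.generate_subgroup_incl) (use g0K K_subgroup in auto)
  ultimately show ?thesis unfolding cyclic_subgroup_def using g0K by blast
qed

end

end

lemma (in group) torsion_free_central_quotient_finite_subgroup_cyclic:
  assumes tf: "torsion_free G" and z: "z \<in> carrier G"
    and central: "\<And>g. g \<in> carrier G \<Longrightarrow> g \<otimes> z = z \<otimes> g"
    and K: "subgroup K (G Mod generate G {z})" "finite K"
  shows "cyclic_subgroup (G Mod generate G {z}) K"
proof (cases "z = \<one>")
  case False
  have "z [^] n \<noteq> \<one>" if "0 < n" for n :: nat using torsion_freeD[OF tf z that] False by blast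
  then interpret central_quotient G z using z central by unfold_locales auto
  show ?thesis by (rule K_cyclic[OF K tf])
next
  case True
  then have Z: "generate G {z} = {\<one>}" by (simp add: generate_one)
  have "C = {\<one>}" if C: "C \<in> K" for C
  proof -
    obtain g where g: "g \<in> carrier G" "C = {\<one>} #> g"
      using subgroup.mem_carrier[OF K(1) C] by (auto simp: Z carrier_FactGroup)
    have "g [^] card K \<in> {\<one>}"
      using finite_subgroup_of_quotient_pow_card[OF central_generate_normal[OF z central] K] g C Z by simp
    moreover have "0 < card K" using K subgroup.one_closed[OF K(1)] by (auto simp: card_gt_0_iff)
    ultimately have "g = \<one>" using torsion_freeD[OF tf g(1)] by blast
    then show ?thesis using g by (simp add: r_coset_def)
  qed
  moreover have "\<one>\<^bsub>G Mod generate G {z}\<^esub> = {\<one>}" by (simp add: Z)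
  ultimately have K_trivial: "K = {\<one>\<^bsub>G Mod generate G {z}\<^esub>}"
    using subgroup.one_closed[OF K(1)] by blast
  interpret Q: group "G Mod generate G {z}"
    by (rule normal.factorgroup_is_group[OF central_generate_normal[OF z central]])
  show ?thesis unfolding cyclic_subgroup_def K_trivial using Q.generate_one by auto
qed

lemma finite_bij_funpow_periodic:
  assumes fin: "finite S" and bij: "bij_betw f S S"
  shows "\<exists>k>0. \<forall>s\<in>S. (f ^^ k) s = s"
proof -
  have maps: "(f ^^ i) s \<in> S" if "s \<in> S" for i s
    using bij_betwE[OF bij_betw_funpow[OF bij, of i]] that by blast
  define F where "F = (\<lambda>i. restrict (f ^^ i) S)"
  have "range F \<subseteq> (\<Pi>\<^sub>E s\<in>S. S)" using maps by (auto simp: F_def)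
  moreover have "finite (\<Pi>\<^sub>E s\<in>S. S)" using fin by (intro finite_PiE) auto
  ultimately have "\<not> inj F" using finite_subset finite_imageD[of F UNIV] by auto
  then obtain a b where ab: "a < b" "F a = F b" unfolding inj_def by (metis linorder_neq_iff)
  have "(f ^^ (b - a)) s = s" if s: "s \<in> S" for s
  proof -
    have "(f ^^ a) ((f ^^ (b - a)) s) = (f ^^ (a + (b - a))) s" by (simp only: funpow_add o_apply)
    also have "\<dots> = (f ^^ b) s" using ab(1) by simp
    also have "\<dots> = (f ^^ a) s" using fun_cong[OF ab(2), of s] s by (simp add: F_def)
    finally show ?thesis
      using inj_onD[OF bij_betw_imp_inj_on[OF bij_betw_funpow[OF bij]]] maps s by blast
  qed
  then show ?thesis using ab(1) by (intro exI[of _ "b - a"]) auto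
qed

lemma group_of_fractions_central:
  assumes frac: "group_of_fractions M G \<phi>" and c: "c \<in> carrier G"
    and commute: "\<And>a. a \<in> carrier M \<Longrightarrow> \<phi> a \<otimes>\<^bsub>G\<^esub> c = c \<otimes>\<^bsub>G\<^esub> \<phi> a"
  shows "central_elem G c"
proof -
  interpret G: group G using frac by (simp add: group_of_fractions_def)
  have hom: "\<phi> \<in> hom M G" using frac by (simp add: group_of_fractions_def)
  have "g \<otimes>\<^bsub>G\<^esub> c = c \<otimes>\<^bsub>G\<^esub> g" if g: "g \<in> carrier G" for g
  proof -
    obtain a b where ab: "a \<in> carrier M" "b \<in> carrier M" "g = inv\<^bsub>G\<^esub> (\<phi> a) \<otimes>\<^bsub>G\<^esub> \<phi> b"
      using frac g unfolding group_of_fractions_def by blast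
    have \<phi>: "\<phi> a \<in> carrier G" "\<phi> b \<in> carrier G" using hom ab by (auto intro: hom_in_carrier)
    have inv_commute: "inv\<^bsub>G\<^esub> (\<phi> a) \<otimes>\<^bsub>G\<^esub> c = c \<otimes>\<^bsub>G\<^esub> inv\<^bsub>G\<^esub> (\<phi> a)"
      using sym[OF G.commutes_inv[OF \<phi>(1) c commute[OF ab(1), symmetric]]] .
    have "g \<otimes>\<^bsub>G\<^esub> c = inv\<^bsub>G\<^esub> (\<phi> a) \<otimes>\<^bsub>G\<^esub> (\<phi> b \<otimes>\<^bsub>G\<^esub> c)"
      using \<phi> c by (simp add: ab(3) G.m_assoc)
    also have "\<dots> = (inv\<^bsub>G\<^esub> (\<phi> a) \<otimes>\<^bsub>G\<^esub> c) \<otimes>\<^bsub>G\<^esub> \<phi> b"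
      using \<phi> c commute[OF ab(2)] by (simp add: G.m_assoc)
    also have "\<dots> = c \<otimes>\<^bsub>G\<^esub> g" using \<phi> c inv_commute by (simp add: ab(3) G.m_assoc)
    finally show ?thesis .
  qed
  then show ?thesis using c by (simp add: central_elem_def)
qed

locale garside_group =
  fixes M :: "('a, 'c) monoid_scheme" and G :: "('b, 'd) monoid_scheme"
    and \<phi> :: "'a \<Rightarrow> 'b" and \<Delta> :: 'a
  assumes garside: "garside_monoid M \<Delta>" and fractions: "group_of_fractions M G \<phi>"
begin

sublocale M: monoid M using garside by (simp add: garside_monoid_def)
sublocale G: group G using fractions by (simp add: group_of_fractions_def)

lemma \<phi>_hom: "\<phi> \<in> hom M G" using fractions by (simp add: group_of_fractions_def)
lemma \<phi>_inj: "inj_on \<phi> (carrier M)" using fractions by (simp add: group_of_fractions_def)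
lemma \<phi>_fraction: "g \<in> carrier G \<Longrightarrow> \<exists>a\<in>carrier M. \<exists>b\<in>carrier M. g = inv\<^bsub>G\<^esub> (\<phi> a) \<otimes>\<^bsub>G\<^esub> \<phi> b"
  using fractions by (simp add: group_of_fractions_def)
lemma \<phi>_closed [simp]: "a \<in> carrier M \<Longrightarrow> \<phi> a \<in> carrier G" using \<phi>_hom by (rule hom_in_carrier)
lemma \<phi>_mult: "a \<in> carrier M \<Longrightarrow> b \<in> carrier M \<Longrightarrow> \<phi> (a \<otimes>\<^bsub>M\<^esub> b) = \<phi> a \<otimes>\<^bsub>G\<^esub> \<phi> b"
  using \<phi>_hom by (rule hom_mult)

lemma \<phi>_one [simp]: "\<phi> \<one>\<^bsub>M\<^esub> = \<one>\<^bsub>G\<^esub>"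
  using \<phi>_mult[of "\<one>\<^bsub>M\<^esub>" "\<one>\<^bsub>M\<^esub>"] G.l_cancel_one'[of "\<phi> \<one>\<^bsub>M\<^esub>" "\<phi> \<one>\<^bsub>M\<^esub>"] by simp

lemma \<phi>_pow: "a \<in> carrier M \<Longrightarrow> \<phi> (a [^]\<^bsub>M\<^esub> (n::nat)) = \<phi> a [^]\<^bsub>G\<^esub> n"
  by (induction n) (simp_all add: \<phi>_mult)

lemma cancellative: "cancellative M" using garside by (simp add: garside_monoid_def)
lemma atomic: "atomic_monoid M" using garside by (simp add: garside_monoid_def)
lemma prefix_lattice: "is_lattice_order (carrier M) (left_div M)"
  using garside by (simp add: garside_monoid_def)
lemma suffix_lattice: "is_lattice_order (carrier M) (right_div M)"
  using garside by (simp add: garside_monoid_def)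
lemma garside_elem: "garside_element M \<Delta>" using garside by (simp add: garside_monoid_def)

lemma left_cancel:
  "a \<in> carrier M \<Longrightarrow> b \<in> carrier M \<Longrightarrow> c \<in> carrier M \<Longrightarrow> a \<otimes>\<^bsub>M\<^esub> b = a \<otimes>\<^bsub>M\<^esub> c \<Longrightarrow> b = c"
  using cancellative unfolding cancellative_def by blast

lemma \<Delta>_closed [simp]: "\<Delta> \<in> carrier M" using garside_elem by (simp add: garside_element_def)

abbreviation simples :: "'a set" where "simples \<equiv> {a\<in>carrier M. left_div M a \<Delta>}"

lemma simples_right: "simples = {a\<in>carrier M. right_div M a \<Delta>}"
  using garside_elem by (simp add: garside_element_def)

lemma simples_finite: "finite simples"
  using garside_elem unfolding garside_element_def by blast

lemma simples_generate: "a \<in> carrier M \<Longrightarrow> \<exists>xs. set xs \<subseteq> simples \<and> list_prod M xs = a"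
  using garside_elem unfolding garside_element_def by blast

lemma list_prod_Cons: "list_prod M (x # xs) = x \<otimes>\<^bsub>M\<^esub> list_prod M xs"
  by (simp add: list_prod_def)

lemma list_prod_closed: "set xs \<subseteq> carrier M \<Longrightarrow> list_prod M xs \<in> carrier M"
  by (induction xs) (auto simp: list_prod_def)

text \<open>Atomicity forbids non-trivial invertible elements: otherwise the trivial element would
  have arbitrarily long decompositions (a b)(a b)...(a b).\<close>

lemma no_units:
  assumes a: "a \<in> carrier M" and b: "b \<in> carrier M" and ab: "a \<otimes>\<^bsub>M\<^esub> b = \<one>\<^bsub>M\<^esub>"
  shows "a = \<one>\<^bsub>M\<^esub>"
proof (rule ccontr)
  assume a1: "a \<noteq> \<one>\<^bsub>M\<^esub>"
  then have b1: "b \<noteq> \<one>\<^bsub>M\<^esub>" using ab a by auto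
  obtain N where N: "\<And>xs. set xs \<subseteq> carrier M - {\<one>\<^bsub>M\<^esub>} \<Longrightarrow> list_prod M xs = \<one>\<^bsub>M\<^esub> \<Longrightarrow> length xs \<le> N"
    using atomic M.one_closed unfolding atomic_monoid_def by blast
  have prod: "list_prod M (concat (replicate n [a, b])) = \<one>\<^bsub>M\<^esub>" for n
    by (induction n) (simp_all add: list_prod_def M.m_assoc[symmetric] a b ab)
  define xs where "xs = concat (replicate (Suc N) [a, b])"
  have "set xs \<subseteq> carrier M - {\<one>\<^bsub>M\<^esub>}" using a b a1 b1 by (auto simp: xs_def)
  then have "length xs \<le> N" using N prod unfolding xs_def by blast
  moreover have "length xs = 2 * Suc N" by (simp add: xs_def length_concat sum_list_replicate)
  ultimately show False by simp
qed

lemma simple_conj_exists: assumes s: "s \<in> simples" shows "\<exists>w\<in>simples. \<Delta> \<otimes>\<^bsub>M\<^esub> s = w \<otimes>\<^bsub>M\<^esub> \<Delta>"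
proof -
  obtain u where u: "u \<in> carrier M" "\<Delta> = u \<otimes>\<^bsub>M\<^esub> s"
    using s simples_right by (auto simp: right_div_def)
  then have "u \<in> simples" using s by (auto simp: left_div_def)
  then obtain w where w: "w \<in> carrier M" "\<Delta> = w \<otimes>\<^bsub>M\<^esub> u"
    using simples_right by (auto simp: right_div_def)
  then have "w \<in> simples" using u by (auto simp: left_div_def)
  moreover have "\<Delta> \<otimes>\<^bsub>M\<^esub> s = w \<otimes>\<^bsub>M\<^esub> \<Delta>"
    using w u s by (simp add: M.m_assoc)
  ultimately show ?thesis by blast
qed

definition \<tau> :: "'a \<Rightarrow> 'a" where "\<tau> s = (SOME w. w \<in> simples \<and> \<Delta> \<otimes>\<^bsub>M\<^esub> s = w \<otimes>\<^bsub>M\<^esub> \<Delta>)"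

lemma \<tau>_spec: assumes "s \<in> simples" shows "\<tau> s \<in> simples" "\<Delta> \<otimes>\<^bsub>M\<^esub> s = \<tau> s \<otimes>\<^bsub>M\<^esub> \<Delta>"
  using someI_ex[OF simple_conj_exists[OF assms, unfolded Bex_def]] unfolding \<tau>_def by auto

lemma \<tau>_bij: "bij_betw \<tau> simples simples"
proof -
  have "inj_on \<tau> simples"
  proof (rule inj_onI)
    fix s s' assume s: "s \<in> simples" and s': "s' \<in> simples" and eq: "\<tau> s = \<tau> s'"
    have "\<Delta> \<otimes>\<^bsub>M\<^esub> s = \<Delta> \<otimes>\<^bsub>M\<^esub> s'"
      unfolding \<tau>_spec(2)[OF s] \<tau>_spec(2)[OF s'] eq ..
    moreover have "s \<in> carrier M" "s' \<in> carrier M" using s s' by auto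
    ultimately show "s = s'" using left_cancel[OF \<Delta>_closed] by blast
  qed
  moreover have "\<tau> ` simples \<subseteq> simples" using \<tau>_spec by blast
  ultimately show ?thesis using endo_inj_surj[OF simples_finite] by (simp add: bij_betw_def)
qed

lemma \<Delta>_pow_conj:
  "s \<in> simples \<Longrightarrow> \<Delta> [^]\<^bsub>M\<^esub> (n::nat) \<otimes>\<^bsub>M\<^esub> s = (\<tau> ^^ n) s \<otimes>\<^bsub>M\<^esub> \<Delta> [^]\<^bsub>M\<^esub> n"
proof (induction n arbitrary: s)
  case (Suc n)
  have t: "\<tau> s \<in> simples" "\<Delta> \<otimes>\<^bsub>M\<^esub> s = \<tau> s \<otimes>\<^bsub>M\<^esub> \<Delta>" using \<tau>_spec[OF Suc.prems] by auto
  have "(\<tau> ^^ n) (\<tau> s) \<in> simples"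
    using bij_betwE[OF bij_betw_funpow[OF \<tau>_bij, of n]] t(1) by blast
  have "\<Delta> [^]\<^bsub>M\<^esub> Suc n \<otimes>\<^bsub>M\<^esub> s = \<Delta> [^]\<^bsub>M\<^esub> n \<otimes>\<^bsub>M\<^esub> (\<Delta> \<otimes>\<^bsub>M\<^esub> s)"
    using Suc.prems by (simp add: M.m_assoc)
  also have "\<dots> = (\<Delta> [^]\<^bsub>M\<^esub> n \<otimes>\<^bsub>M\<^esub> \<tau> s) \<otimes>\<^bsub>M\<^esub> \<Delta>" using t by (simp add: M.m_assoc)
  also have "\<dots> = (\<tau> ^^ n) (\<tau> s) \<otimes>\<^bsub>M\<^esub> \<Delta> [^]\<^bsub>M\<^esub> Suc n"
    using Suc.IH[OF t(1)] \<open>(\<tau> ^^ n) (\<tau> s) \<in> simples\<close> by (simp add: M.m_assoc)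
  finally show ?case by (simp add: funpow_Suc_right del: funpow.simps)
qed simp

lemma \<Delta>_pow_central_monoid: "\<exists>k>0. \<forall>a\<in>carrier M. \<Delta> [^]\<^bsub>M\<^esub> (k::nat) \<otimes>\<^bsub>M\<^esub> a = a \<otimes>\<^bsub>M\<^esub> \<Delta> [^]\<^bsub>M\<^esub> k"
proof -
  obtain k where k: "k > 0" "\<forall>s\<in>simples. (\<tau> ^^ k) s = s"
    using finite_bij_funpow_periodic[OF simples_finite \<tau>_bij] by blast
  let ?c = "\<Delta> [^]\<^bsub>M\<^esub> k"
  have "?c \<otimes>\<^bsub>M\<^esub> list_prod M xs = list_prod M xs \<otimes>\<^bsub>M\<^esub> ?c" if "set xs \<subseteq> simples" for xs
    using that
  proof (induction xs)
    case (Cons s xs)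
    have s: "s \<in> simples" "?c \<otimes>\<^bsub>M\<^esub> s = s \<otimes>\<^bsub>M\<^esub> ?c" using Cons.prems \<Delta>_pow_conj[of s k] k(2) by auto
    have "list_prod M xs \<in> carrier M" using Cons.prems list_prod_closed by auto
    then show ?case using Cons s by (simp add: list_prod_Cons M.m_assoc[symmetric]) (simp add: M.m_assoc)
  qed (simp add: list_prod_def)
  then show ?thesis using k(1) simples_generate by blast
qed

lemma \<Delta>_pow_central: "\<exists>k>0. central_elem G (\<phi> \<Delta> [^]\<^bsub>G\<^esub> (k::nat))"
proof -
  obtain k where k: "k > 0" "\<And>a. a \<in> carrier M \<Longrightarrow> \<Delta> [^]\<^bsub>M\<^esub> (k::nat) \<otimes>\<^bsub>M\<^esub> a = a \<otimes>\<^bsub>M\<^esub> \<Delta> [^]\<^bsub>M\<^esub> k"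
    using \<Delta>_pow_central_monoid by blast
  have "\<phi> a \<otimes>\<^bsub>G\<^esub> \<phi> \<Delta> [^]\<^bsub>G\<^esub> k = \<phi> \<Delta> [^]\<^bsub>G\<^esub> k \<otimes>\<^bsub>G\<^esub> \<phi> a" if a: "a \<in> carrier M" for a
    using arg_cong[OF k(2)[OF a], of \<phi>] a by (simp add: \<phi>_mult \<phi>_pow)
  then show ?thesis using k(1) by (intro exI[of _ k] conjI group_of_fractions_central[OF fractions]) auto
qed

end

context garside_group
begin

definition frac_le :: "'b \<Rightarrow> 'b \<Rightarrow> bool" (infix "\<preceq>" 50) where
  "g \<preceq> h \<longleftrightarrow> (\<exists>r\<in>carrier M. h = g \<otimes>\<^bsub>G\<^esub> \<phi> r)"

lemma frac_le_refl: "g \<in> carrier G \<Longrightarrow> g \<preceq> g"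
  unfolding frac_le_def by (intro bexI[of _ "\<one>\<^bsub>M\<^esub>"]) auto

lemma frac_le_trans:
  assumes g: "g \<in> carrier G" and "g \<preceq> h" "h \<preceq> k" shows "g \<preceq> k"
proof -
  obtain r r' where r: "r \<in> carrier M" "r' \<in> carrier M" "h = g \<otimes>\<^bsub>G\<^esub> \<phi> r" "k = h \<otimes>\<^bsub>G\<^esub> \<phi> r'"
    using assms(2,3) by (auto simp: frac_le_def)
  then have "k = g \<otimes>\<^bsub>G\<^esub> \<phi> (r \<otimes>\<^bsub>M\<^esub> r')" using g by (simp add: \<phi>_mult G.m_assoc)
  then show ?thesis using r by (auto simp: frac_le_def)
qed

lemma frac_le_antisym:
  assumes g: "g \<in> carrier G" and "g \<preceq> h" "h \<preceq> g" shows "g = h"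
proof -
  obtain r r' where r: "r \<in> carrier M" "r' \<in> carrier M" "h = g \<otimes>\<^bsub>G\<^esub> \<phi> r" "g = h \<otimes>\<^bsub>G\<^esub> \<phi> r'"
    using assms(2,3) by (auto simp: frac_le_def)
  have "g = (g \<otimes>\<^bsub>G\<^esub> \<phi> r) \<otimes>\<^bsub>G\<^esub> \<phi> r'" using r(4) unfolding r(3) .
  also have "\<dots> = g \<otimes>\<^bsub>G\<^esub> \<phi> (r \<otimes>\<^bsub>M\<^esub> r')" using g r(1,2) by (simp add: \<phi>_mult G.m_assoc)
  finally have "g \<otimes>\<^bsub>G\<^esub> \<phi> (r \<otimes>\<^bsub>M\<^esub> r') = g" by (rule sym)
  then have "\<phi> (r \<otimes>\<^bsub>M\<^esub> r') = \<phi> \<one>\<^bsub>M\<^esub>" using g r(1,2) by simp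
  then have "r \<otimes>\<^bsub>M\<^esub> r' = \<one>\<^bsub>M\<^esub>" using r by (intro inj_onD[OF \<phi>_inj]) auto
  then have "r = \<one>\<^bsub>M\<^esub>" using no_units r(1,2) by blast
  then show ?thesis using r(3) g by simp
qed

lemma frac_le_mult_cancel:
  assumes "x \<in> carrier G" "g \<in> carrier G" "h \<in> carrier G"
  shows "x \<otimes>\<^bsub>G\<^esub> g \<preceq> x \<otimes>\<^bsub>G\<^esub> h \<longleftrightarrow> g \<preceq> h"
  using assms unfolding frac_le_def by (auto simp: G.m_assoc)

text \<open>Any two elements of the group have a common denominator; this uses the common right
  multiples provided by the suffix lattice.\<close>

lemma common_denominator:
  assumes g: "g \<in> carrier G" and h: "h \<in> carrier G"
  shows "\<exists>c\<in>carrier G. \<exists>p\<in>carrier M. \<exists>q\<in>carrier M. g = c \<otimes>\<^bsub>G\<^esub> \<phi> p \<and> h = c \<otimes>\<^bsub>G\<^esub> \<phi> q"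
proof -
  obtain a b a' b' where ab: "a \<in> carrier M" "b \<in> carrier M" "a' \<in> carrier M" "b' \<in> carrier M"
    and g_eq: "g = inv\<^bsub>G\<^esub> (\<phi> a) \<otimes>\<^bsub>G\<^esub> \<phi> b" and h_eq: "h = inv\<^bsub>G\<^esub> (\<phi> a') \<otimes>\<^bsub>G\<^esub> \<phi> b'"
    using \<phi>_fraction[OF g] \<phi>_fraction[OF h] by blast
  obtain j where j: "j \<in> carrier M" "right_div M a j" "right_div M a' j"
    using conjunct1[OF suffix_lattice[unfolded is_lattice_order_def, rule_format, OF ab(1,3)]] by blast
  have expand: "inv\<^bsub>G\<^esub> (\<phi> x) \<otimes>\<^bsub>G\<^esub> \<phi> y = inv\<^bsub>G\<^esub> (\<phi> j) \<otimes>\<^bsub>G\<^esub> \<phi> (u \<otimes>\<^bsub>M\<^esub> y)"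
    if "x \<in> carrier M" "y \<in> carrier M" "u \<in> carrier M" "j = u \<otimes>\<^bsub>M\<^esub> x" for x y u
    using that by (simp add: \<phi>_mult G.inv_mult_group G.m_assoc[symmetric]) (simp add: G.m_assoc)
  obtain u u' where "u \<in> carrier M" "u' \<in> carrier M" "j = u \<otimes>\<^bsub>M\<^esub> a" "j = u' \<otimes>\<^bsub>M\<^esub> a'"
    using j by (auto simp: right_div_def)
  then show ?thesis
    using expand ab g_eq h_eq j(1) by (intro bexI[of _ "inv\<^bsub>G\<^esub> (\<phi> j)"]) auto
qed

text \<open>Hence the group is a lattice for \<preceq>: a common denominator reduces joins to the
  prefix lattice of the monoid.\<close>

lemma join_exists:
  assumes g: "g \<in> carrier G" and h: "h \<in> carrier G"
  shows "\<exists>j\<in>carrier G. g \<preceq> j \<and> h \<preceq> j \<and> (\<forall>v\<in>carrier G. g \<preceq> v \<longrightarrow> h \<preceq> v \<longrightarrow> j \<preceq> v)"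
proof -
  obtain c p q where c: "c \<in> carrier G" and pq: "p \<in> carrier M" "q \<in> carrier M"
    and g_eq: "g = c \<otimes>\<^bsub>G\<^esub> \<phi> p" and h_eq: "h = c \<otimes>\<^bsub>G\<^esub> \<phi> q"
    using common_denominator[OF g h] by blast
  obtain l where l: "l \<in> carrier M" "left_div M p l" "left_div M q l"
    and l_least: "\<And>w. w \<in> carrier M \<Longrightarrow> left_div M p w \<Longrightarrow> left_div M q w \<Longrightarrow> left_div M l w"
    using conjunct1[OF prefix_lattice[unfolded is_lattice_order_def, rule_format, OF pq]] by blast
  have below: "\<phi> x \<preceq> \<phi> w" if "x \<in> carrier M" "left_div M x w" for x w
    using that by (auto simp: frac_le_def left_div_def \<phi>_mult)
  have least: "\<phi> l \<preceq> w" if w: "w \<in> carrier G" "\<phi> p \<preceq> w" "\<phi> q \<preceq> w" for w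
  proof -
    obtain r r' where r: "r \<in> carrier M" "r' \<in> carrier M"
      and w_eq: "w = \<phi> (p \<otimes>\<^bsub>M\<^esub> r)" "w = \<phi> (q \<otimes>\<^bsub>M\<^esub> r')"
      using w(2,3) pq by (auto simp: frac_le_def \<phi>_mult)
    then have eq: "p \<otimes>\<^bsub>M\<^esub> r = q \<otimes>\<^bsub>M\<^esub> r'" using pq by (intro inj_onD[OF \<phi>_inj]) auto
    have "left_div M p (p \<otimes>\<^bsub>M\<^esub> r)" using r(1) unfolding left_div_def by blast
    moreover have "left_div M q (p \<otimes>\<^bsub>M\<^esub> r)" using r(2) eq unfolding left_div_def by blast
    ultimately have "left_div M l (p \<otimes>\<^bsub>M\<^esub> r)" using l_least[OF M.m_closed[OF pq(1) r(1)]] by blast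
    then show ?thesis using w_eq(1) below l(1) by blast
  qed
  have "\<phi> p \<preceq> \<phi> l" "\<phi> q \<preceq> \<phi> l" using below pq l by auto
  then have upper: "g \<preceq> c \<otimes>\<^bsub>G\<^esub> \<phi> l" "h \<preceq> c \<otimes>\<^bsub>G\<^esub> \<phi> l"
    unfolding g_eq h_eq using frac_le_mult_cancel c pq l(1) by simp_all
  have least_upper: "\<forall>v\<in>carrier G. g \<preceq> v \<longrightarrow> h \<preceq> v \<longrightarrow> c \<otimes>\<^bsub>G\<^esub> \<phi> l \<preceq> v"
  proof (intro ballI impI)
    fix v assume v: "v \<in> carrier G" "g \<preceq> v" "h \<preceq> v"
    define w where "w = inv\<^bsub>G\<^esub> c \<otimes>\<^bsub>G\<^esub> v"
    have w: "w \<in> carrier G" and v_eq: "v = c \<otimes>\<^bsub>G\<^esub> w"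
      using c v(1) by (simp_all add: w_def G.m_assoc[symmetric])
    have "\<phi> p \<preceq> w" using v(2) frac_le_mult_cancel[OF c \<phi>_closed[OF pq(1)] w] g_eq v_eq by simp
    moreover have "\<phi> q \<preceq> w" using v(3) frac_le_mult_cancel[OF c \<phi>_closed[OF pq(2)] w] h_eq v_eq by simp
    ultimately have "\<phi> l \<preceq> w" using least w by blast
    then show "c \<otimes>\<^bsub>G\<^esub> \<phi> l \<preceq> v" using frac_le_mult_cancel[OF c \<phi>_closed[OF l(1)] w] v_eq by simp
  qed
  show ?thesis
  proof (rule bexI[of _ "c \<otimes>\<^bsub>G\<^esub> \<phi> l"])
    show "c \<otimes>\<^bsub>G\<^esub> \<phi> l \<in> carrier G" using c l(1) by simp
  qed (intro conjI upper least_upper)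
qed

definition is_lub :: "'b set \<Rightarrow> 'b \<Rightarrow> bool" where
  "is_lub A u \<longleftrightarrow> u \<in> carrier G \<and> (\<forall>s\<in>A. s \<preceq> u) \<and> (\<forall>v\<in>carrier G. (\<forall>s\<in>A. s \<preceq> v) \<longrightarrow> u \<preceq> v)"

lemma finite_lub_exists:
  "finite A \<Longrightarrow> A \<noteq> {} \<Longrightarrow> A \<subseteq> carrier G \<Longrightarrow> \<exists>u. is_lub A u"
proof (induction A rule: finite_ne_induct)
  case (singleton x)
  then show ?case using frac_le_refl by (auto simp: is_lub_def)
next
  case (insert x F)
  then obtain u where u: "is_lub F u" by auto
  have x: "x \<in> carrier G" using insert.prems by simp
  have uc: "u \<in> carrier G" using u by (simp add: is_lub_def)
  obtain j where j: "j \<in> carrier G" "x \<preceq> j" "u \<preceq> j"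
    and j_least: "\<And>v. v \<in> carrier G \<Longrightarrow> x \<preceq> v \<Longrightarrow> u \<preceq> v \<Longrightarrow> j \<preceq> v"
    using join_exists[OF x uc] by blast
  have "is_lub (insert x F) j"
    unfolding is_lub_def
  proof (intro conjI ballI impI)
    fix s assume s: "s \<in> insert x F"
    show "s \<preceq> j"
    proof (cases "s = x")
      case False
      then have "s \<in> F" "s \<in> carrier G" using s insert.prems by auto
      then show ?thesis using frac_le_trans u j(3) by (auto simp: is_lub_def)
    qed (use j(2) in simp)
  next
    fix v assume "v \<in> carrier G" "\<forall>s\<in>insert x F. s \<preceq> v"
    then show "j \<preceq> v" using j_least u by (simp add: is_lub_def)
  qed (rule j(1))
  then show ?case by blast
qed

lemma is_lub_unique: "is_lub A u \<Longrightarrow> is_lub A u' \<Longrightarrow> u = u'"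
  unfolding is_lub_def using frac_le_antisym by blast

lemma is_lub_mult:
  assumes u: "is_lub A u" and A: "A \<subseteq> carrier G" and x: "x \<in> carrier G"
  shows "is_lub ((\<lambda>t. x \<otimes>\<^bsub>G\<^esub> t) ` A) (x \<otimes>\<^bsub>G\<^esub> u)"
proof -
  have "v = x \<otimes>\<^bsub>G\<^esub> (inv\<^bsub>G\<^esub> x \<otimes>\<^bsub>G\<^esub> v)" if "v \<in> carrier G" for v
    using that x by (simp add: G.m_assoc[symmetric])
  then show ?thesis
    using u A x frac_le_mult_cancel unfolding is_lub_def
    by (auto simp: subset_iff) (metis G.m_closed G.inv_closed)
qed

text \<open>Torsion-freeness: if x^n = 1, left multiplication by x permutes the finite set of
  powers of x, hence fixes its least upper bound u, so x u = u and x = 1.\<close>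

lemma torsion_free: "torsion_free G"
  unfolding torsion_free_def
proof (intro ballI allI impI, elim conjE)
  fix x and n :: nat assume x: "x \<in> carrier G" and n: "0 < n" and xn: "x [^]\<^bsub>G\<^esub> n = \<one>\<^bsub>G\<^esub>"
  define A where "A = (\<lambda>i. x [^]\<^bsub>G\<^esub> i) ` {..<n}"
  have A: "finite A" "A \<noteq> {}" "A \<subseteq> carrier G" using n x by (auto simp: A_def)
  have "x \<otimes>\<^bsub>G\<^esub> x [^]\<^bsub>G\<^esub> i \<in> A" if "i < n" for i
  proof -
    have step: "x \<otimes>\<^bsub>G\<^esub> x [^]\<^bsub>G\<^esub> i = x [^]\<^bsub>G\<^esub> Suc i" by (rule sym[OF G.nat_pow_Suc2[OF x]])
    show ?thesis
    proof (cases "Suc i < n")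
      case True
      then show ?thesis unfolding step A_def by blast
    next
      case False
      then have "Suc i = n" using that by simp
      then have "x [^]\<^bsub>G\<^esub> Suc i = x [^]\<^bsub>G\<^esub> (0::nat)" using xn by simp
      then show ?thesis unfolding step A_def using n by blast
    qed
  qed
  then have "(\<lambda>t. x \<otimes>\<^bsub>G\<^esub> t) ` A \<subseteq> A" by (auto simp: A_def)
  moreover have "inj_on (\<lambda>t. x \<otimes>\<^bsub>G\<^esub> t) A" using G.inj_on_cmult[OF x] A(3) by (rule inj_on_subset)
  ultimately have perm: "(\<lambda>t. x \<otimes>\<^bsub>G\<^esub> t) ` A = A" using endo_inj_surj[OF A(1)] by blast
  obtain u where u: "is_lub A u" using finite_lub_exists[OF A] by blast
  then have "x \<otimes>\<^bsub>G\<^esub> u = u" using is_lub_mult[OF u A(3) x] perm is_lub_unique by metis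
  then show "x = \<one>\<^bsub>G\<^esub>" using u x by (simp add: is_lub_def G.r_cancel_one)
qed

end

theorem mainTheorem9:
  fixes M :: "('a, 'c) monoid_scheme" and G :: "('b, 'd) monoid_scheme"
    and \<phi> :: "'a \<Rightarrow> 'b" and \<Delta> :: 'a and m :: nat
  assumes "garside_monoid M \<Delta>"
    and "group_of_fractions M G \<phi>"
    and "m = (LEAST n::nat. n > 0 \<and> central_elem G (\<phi> \<Delta> [^]\<^bsub>G\<^esub> n))"
  shows "\<forall>K. subgroup K (G Mod (generate G {\<phi> \<Delta> [^]\<^bsub>G\<^esub> m})) \<and> finite K
           \<longrightarrow> cyclic_subgroup (G Mod (generate G {\<phi> \<Delta> [^]\<^bsub>G\<^esub> m})) K"
proof (intro allI impI, elim conjE)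
  interpret garside_group M G \<phi> \<Delta> using assms(1,2) by unfold_locales
  have "m > 0 \<and> central_elem G (\<phi> \<Delta> [^]\<^bsub>G\<^esub> m)"
    unfolding assms(3) using \<Delta>_pow_central by (rule LeastI_ex)
  then have central: "central_elem G (\<phi> \<Delta> [^]\<^bsub>G\<^esub> m)" by blast
  fix K assume "subgroup K (G Mod (generate G {\<phi> \<Delta> [^]\<^bsub>G\<^esub> m}))" "finite K"
  then show "cyclic_subgroup (G Mod (generate G {\<phi> \<Delta> [^]\<^bsub>G\<^esub> m})) K"
    using G.torsion_free_central_quotient_finite_subgroup_cyclic[OF torsion_free] central
    by (simp add: central_elem_def)
qed

end
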